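(* Let $n\ge2$, $C>0$, $x\in\mathcal{K}_S$, and $\tilde{x}=x+\eta$ where $\eta$ has i.i.d. Laplace entries with mean $0$ and scale $b>0$ (density $\prod_i\frac{1}{2b}e^{-|\eta_i|/b}$). Let $f$ denote the probability density of $\pi_S(\tilde{x})$ with respect to the $(n-1)$-dimensional Lebesgue measure on the hyperplane $\mathcal{K}_S$. Then for every pair $(i,j)$ and every $y\in\mathcal{K}_S$ with $x_i\le x_j$ and $y_i\le y_j$, $$f(y)\ge f(\mathrm{sw}_{ij}(y)).$$
   Context: $\mathcal{K}_S=\{v\in\mathbb{R}^n:\sum_iv_i=C\}$ and $\pi_S$ is the Euclidean projection onto $\mathcal{K}_S$. $\mathrm{sw}_{ij}(y)$ is the vector obtained from $y$ by swapping its $i$-th and $j$-th entries. *)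

theory Defs
  imports "HOL-Analysis.Analysis"
begin

definition K_S :: "real \<Rightarrow> (real ^ 'n) set" where
  "K_S C = {v. (\<Sum>i\<in>UNIV. v $ i) = C}"

definition proj_S :: "real \<Rightarrow> real ^ 'n \<Rightarrow> real ^ 'n" where
  "proj_S C v = (\<chi> k. v $ k - ((\<Sum>i\<in>UNIV. v $ i) - C) / real CARD('n))"

definition sw :: "'n \<Rightarrow> 'n \<Rightarrow> real ^ 'n \<Rightarrow> real ^ 'n" where
  "sw i j y = (\<chi> k. if k = i then y $ j else if k = j then y $ i else y $ k)"

text \<open>The (n-1)-dimensional Lebesgue (surface) measure on the hyperplane K_S:
  the measure of A is the n-dimensional volume of the set of points at signed distance
  in [0,1] from K_S (along the unit normal (1,...,1)/sqrt n) whose projection lies in A,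
  i.e. the volume of the unit-height right cylinder over A.\<close>
definition hyperplane_measure :: "real \<Rightarrow> (real ^ 'n) measure" where
  "hyperplane_measure C =
     distr (restrict_space lborel
              {z :: real ^ 'n. C \<le> (\<Sum>i\<in>UNIV. z $ i) \<and> (\<Sum>i\<in>UNIV. z $ i) \<le> C + sqrt (real CARD('n))})
           borel (proj_S C)"

definition laplace_density :: "real \<Rightarrow> real ^ 'n \<Rightarrow> real ^ 'n \<Rightarrow> real" where
  "laplace_density b x z = (\<Prod>i\<in>UNIV. exp (- \<bar>z $ i - x $ i\<bar> / b) / (2 * b))"

definition noisy_law :: "real \<Rightarrow> real ^ 'n \<Rightarrow> (real ^ 'n) measure" where
  "noisy_law b x = density lborel (\<lambda>z. ennreal (laplace_density b x z))"

definition is_proj_density :: "real \<Rightarrow> real \<Rightarrow> real ^ 'n \<Rightarrow> (real ^ 'n \<Rightarrow> real) \<Rightarrow> bool" where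
  "is_proj_density C b x f \<longleftrightarrow>
     f \<in> borel_measurable borel \<and> (\<forall>y. 0 \<le> f y) \<and>
     distr (noisy_law b x) borel (proj_S C) = density (hyperplane_measure C) (\<lambda>y. ennreal (f y))"

end

theory Submission
  imports Defs
begin

text \<open>Write \<open>z = \<pi>\<^sub>S z + t\<cdot>\<one>\<close>. The hyperplane measure of \<open>A\<close> is the volume of the
  unit-height cylinder over \<open>A\<close>, and this cylinder meets every line \<open>z + t\<cdot>\<one>\<close> in a segment of
  length \<open>1/\<surd>n\<close>; hence, by Fubini's theorem, \<open>y \<mapsto> \<surd>n \<integral> p(y + t\<cdot>\<one>) dt\<close> is a density of
  \<open>\<pi>\<^sub>S x\<^sup>~\<close>, where \<open>p\<close> is the Laplace density, and it is continuous by dominated convergence.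
  The hyperplane measure is \<open>\<sigma>\<close>-finite and charges every nonempty relatively open subset of
  \<open>K\<^sub>S\<close>, so every continuous density agrees with this one on \<open>K\<^sub>S\<close>.
  If \<open>x\<^sub>i \<le> x\<^sub>j\<close> and \<open>u\<^sub>i \<le> u\<^sub>j\<close>, then \<open>|u\<^sub>i-x\<^sub>i| + |u\<^sub>j-x\<^sub>j| \<le> |u\<^sub>j-x\<^sub>i| + |u\<^sub>i-x\<^sub>j|\<close>,
  i.e. \<open>p(u) \<ge> p(sw\<^sub>i\<^sub>j u)\<close>; as the swap commutes with translation along \<open>\<one>\<close>,
  integrating along the line through \<open>y\<close> gives \<open>f(y) \<ge> f(sw\<^sub>i\<^sub>j y)\<close>.\<close>

section \<open>The projection onto the hyperplane\<close>

definition ones :: "real ^ 'n" where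
  "ones = (\<chi> k. 1)"

lemma sum_add_scaleR_ones:
  fixes z :: "real ^ 'n"
  shows "(\<Sum>i\<in>UNIV. (z + t *\<^sub>R ones) $ i) = (\<Sum>i\<in>UNIV. z $ i) + real CARD('n) * t"
  by (simp add: ones_def sum.distrib)

lemma proj_S_eq:
  fixes z :: "real ^ 'n"
  shows "proj_S C z = z - (((\<Sum>i\<in>UNIV. z $ i) - C) / real CARD('n)) *\<^sub>R ones"
  by (simp add: proj_S_def ones_def vec_eq_iff)

lemma proj_S_add_scaleR_ones: "proj_S C (z + t *\<^sub>R ones) = proj_S C (z :: real ^ 'n)"
  unfolding proj_S_eq sum_add_scaleR_ones by (simp add: vec_eq_iff ones_def field_simps)

lemma proj_S_add_decomposition:
  fixes z :: "real ^ 'n"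
  shows "proj_S C z + (((\<Sum>i\<in>UNIV. z $ i) - C) / real CARD('n)) *\<^sub>R ones = z"
  by (simp add: proj_S_eq)

lemma proj_S_in_K_S: "proj_S C z \<in> K_S C"
  by (simp add: K_S_def proj_S_def sum_subtractf)

lemma proj_S_eq_self: "y \<in> K_S C \<Longrightarrow> proj_S C y = y"
  by (simp add: proj_S_eq K_S_def)

lemma continuous_on_proj_S: "continuous_on UNIV (proj_S C :: real ^ 'n \<Rightarrow> _)"
  unfolding proj_S_eq[abs_def] by (intro continuous_intros) simp

lemma borel_measurable_proj_S [measurable]:
  "proj_S C \<in> borel_measurable (borel :: (real ^ 'n) measure)"
  by (rule borel_measurable_continuous_onI[OF continuous_on_proj_S])

lemma closed_K_S: "closed (K_S C :: (real ^ 'n) set)"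
  unfolding K_S_def by (intro closed_Collect_eq continuous_intros)

section \<open>The hyperplane measure\<close>

definition slab :: "real \<Rightarrow> (real ^ 'n) set" where
  "slab C = {z. C \<le> (\<Sum>i\<in>UNIV. z $ i) \<and> (\<Sum>i\<in>UNIV. z $ i) \<le> C + sqrt (real CARD('n))}"

lemma closed_slab: "closed (slab C :: (real ^ 'n) set)"
  unfolding slab_def by (intro closed_Collect_conj closed_Collect_le continuous_intros)

lemma slab_borel [measurable]: "slab C \<in> sets (borel :: (real ^ 'n) measure)"
  by (rule borel_closed[OF closed_slab])

lemma hyperplane_measure_eq_slab:
  "hyperplane_measure C = distr (restrict_space lborel (slab C)) borel (proj_S C)"
  unfolding hyperplane_measure_def slab_def ..

lemma sets_hyperplane_measure [measurable_cong, simp]: "sets (hyperplane_measure C) = sets borel"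
  by (simp add: hyperplane_measure_eq_slab)

lemma nn_integral_hyperplane_measure:
  fixes g :: "real ^ 'n \<Rightarrow> ennreal"
  assumes [measurable]: "g \<in> borel_measurable borel"
  shows "(\<integral>\<^sup>+y. g y \<partial>hyperplane_measure C) = (\<integral>\<^sup>+z. g (proj_S C z) * indicator (slab C) z \<partial>lborel)"
proof -
  have "(\<integral>\<^sup>+y. g y \<partial>hyperplane_measure C) = (\<integral>\<^sup>+z. g (proj_S C z) \<partial>restrict_space lborel (slab C))"
    unfolding hyperplane_measure_eq_slab by (rule nn_integral_distr) (auto intro: measurable_restrict_space1)
  also have "\<dots> = (\<integral>\<^sup>+z. g (proj_S C z) * indicator (slab C) z \<partial>lborel)"
    by (rule nn_integral_restrict_space) auto
  finally show ?thesis .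
qed

lemma emeasure_hyperplane_measure:
  fixes U :: "(real ^ 'n) set"
  assumes [measurable]: "U \<in> sets borel"
  shows "emeasure (hyperplane_measure C) U = emeasure lborel (proj_S C -` U \<inter> slab C)"
proof -
  have "emeasure (hyperplane_measure C) U = (\<integral>\<^sup>+y. indicator U y \<partial>hyperplane_measure C)"
    by simp
  also have "\<dots> = (\<integral>\<^sup>+z. indicator (proj_S C -` U \<inter> slab C) z \<partial>lborel)"
    unfolding nn_integral_hyperplane_measure[OF borel_measurable_indicator[OF assms]]
    by (intro nn_integral_cong) (simp split: split_indicator)
  also have "\<dots> = emeasure lborel (proj_S C -` U \<inter> slab C)"
    using measurable_sets[OF borel_measurable_proj_S assms, of C] by (intro nn_integral_indicator) simp
  finally show ?thesis .
qed

lemma emeasure_hyperplane_measure_pos: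
  fixes y :: "real ^ 'n"
  assumes y: "y \<in> K_S C" and "open U" "y \<in> U"
  shows "emeasure (hyperplane_measure C) (K_S C \<inter> U) > 0"
proof -
  define N where "N = real CARD('n)"
  have N: "N > 0" unfolding N_def by simp
  define V where "V = {z :: real ^ 'n. C < (\<Sum>i\<in>UNIV. z $ i) \<and> (\<Sum>i\<in>UNIV. z $ i) < C + sqrt N} \<inter> proj_S C -` U"
  have KU [measurable]: "K_S C \<inter> U \<in> sets borel"
    using closed_K_S \<open>open U\<close> by (intro sets.Int borel_closed borel_open)
  have "open V" unfolding V_def using \<open>open U\<close>
    by (intro open_Int open_Collect_conj open_Collect_less continuous_intros continuous_open_vimage)
       (auto intro: continuous_on_proj_S)
  \<comment> \<open>the point above \<open>y\<close> halfway up the cylinder\<close>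
  define z where "z = y + (sqrt N / (2 * N)) *\<^sub>R ones"
  have "(\<Sum>i\<in>UNIV. z $ i) = C + sqrt N / 2"
    using y N unfolding z_def sum_add_scaleR_ones N_def[symmetric] K_S_def by simp
  moreover have "proj_S C z = y" unfolding z_def proj_S_add_scaleR_ones proj_S_eq_self[OF y] ..
  ultimately have "z \<in> V" using N \<open>y \<in> U\<close> unfolding V_def by simp
  from open_contains_box[OF \<open>open V\<close> this] obtain a b
    where ab: "box a b \<subseteq> V" "z \<in> box a b" "\<forall>i\<in>Basis. a \<bullet> i < b \<bullet> i" by blast
  have "0 < emeasure lborel (box a b)"
    using ab(3) unfolding emeasure_lborel_box_eq
    by (auto intro!: prod_pos simp: algebra_simps less_imp_le)
  also have "\<dots> \<le> emeasure lborel (proj_S C -` (K_S C \<inter> U) \<inter> slab C)"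
  proof (rule emeasure_mono)
    show "box a b \<subseteq> proj_S C -` (K_S C \<inter> U) \<inter> slab C"
      using ab(1) proj_S_in_K_S unfolding V_def slab_def N_def by fastforce
    show "proj_S C -` (K_S C \<inter> U) \<inter> slab C \<in> sets lborel"
      using measurable_sets[OF borel_measurable_proj_S KU, of C] by simp
  qed
  finally show ?thesis by (subst emeasure_hyperplane_measure) auto
qed

lemma bounded_slab_vimage_proj_S:
  "bounded (proj_S C -` cball 0 r \<inter> slab C :: (real ^ 'n) set)"
proof -
  define N where "N = real CARD('n)"
  have N: "N \<ge> 1" unfolding N_def by (simp add: Suc_leI)
  have "norm z \<le> r + sqrt N / N * norm (ones :: real ^ 'n)" if z: "z \<in> proj_S C -` cball 0 r \<inter> slab C" for z :: "real ^ 'n"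
  proof -
    define s where "s = ((\<Sum>i\<in>UNIV. z $ i) - C) / N"
    have "C \<le> (\<Sum>i\<in>UNIV. z $ i)" "(\<Sum>i\<in>UNIV. z $ i) - C \<le> sqrt N"
      using z by (auto simp: slab_def N_def)
    then have s: "0 \<le> s" "s \<le> sqrt N / N"
      using N unfolding s_def by (auto simp: divide_right_mono)
    have "z = proj_S C z + s *\<^sub>R ones" unfolding s_def N_def proj_S_add_decomposition ..
    then have "norm z \<le> norm (proj_S C z) + s * norm (ones :: real ^ 'n)"
      using norm_triangle_ineq[of "proj_S C z" "s *\<^sub>R ones"] s(1) by simp
    also have "\<dots> \<le> r + sqrt N / N * norm (ones :: real ^ 'n)"
      using z s(2) by (intro add_mono mult_right_mono) auto
    finally show ?thesis .
  qed
  then show ?thesis unfolding bounded_iff by blast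
qed

lemma sigma_finite_hyperplane_measure:
  "sigma_finite_measure (hyperplane_measure C :: (real ^ 'n) measure)"
proof
  define A where "A = range (\<lambda>k::nat. cball (0 :: real ^ 'n) (real k))"
  have fin: "emeasure (hyperplane_measure C) a \<noteq> \<infinity>" if "a \<in> A" for a
  proof -
    from that obtain k where a: "a = cball 0 (real k)" unfolding A_def by blast
    show ?thesis
      using emeasure_bounded_finite[OF bounded_slab_vimage_proj_S, of C "real k"]
      unfolding a by (simp add: emeasure_hyperplane_measure less_top)
  qed
  have "countable A" "A \<subseteq> sets (hyperplane_measure C)" "\<Union> A = space (hyperplane_measure C)"
    unfolding A_def hyperplane_measure_eq_slab by (auto intro: borel_closed simp: real_arch_simple)
  with fin show "\<exists>A. countable A \<and> A \<subseteq> sets (hyperplane_measure C :: (real ^ 'n) measure) \<and>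
      \<Union> A = space (hyperplane_measure C) \<and> (\<forall>a\<in>A. emeasure (hyperplane_measure C) a \<noteq> \<infinity>)"
    by (intro exI[of _ A] conjI ballI)
qed

section \<open>The Laplace density and its integrals along the diagonal\<close>

lemma continuous_on_laplace_density: "continuous_on UNIV (laplace_density b x :: real ^ 'n \<Rightarrow> real)"
  unfolding laplace_density_def divide_inverse by (intro continuous_intros)

lemma borel_measurable_laplace_density [measurable]:
  "laplace_density b x \<in> borel_measurable (borel :: (real ^ 'n) measure)"
  by (rule borel_measurable_continuous_onI[OF continuous_on_laplace_density])

lemma laplace_density_nonneg: "b > 0 \<Longrightarrow> 0 \<le> laplace_density b x z"
  unfolding laplace_density_def by (intro prod_nonneg) auto

lemma laplace_density_le_coordinate:
  fixes x z :: "real ^ 'n"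
  assumes b: "b > 0"
  shows "laplace_density b x z \<le> exp (- \<bar>z $ i - x $ i\<bar> / b) / (2 * b) ^ CARD('n)"
proof -
  have "laplace_density b x z \<le> (\<Prod>k\<in>UNIV. (if k = i then exp (- \<bar>z $ i - x $ i\<bar> / b) else 1) / (2 * b))"
    unfolding laplace_density_def using b by (intro prod_mono) (auto simp: divide_right_mono)
  also have "\<dots> = exp (- \<bar>z $ i - x $ i\<bar> / b) / (2 * b) ^ CARD('n)"
    by (simp add: prod_dividef prod.If_cases)
  finally show ?thesis .
qed

lemma integrable_exp_abs:
  fixes b :: real
  assumes b: "b > 0"
  shows "integrable lborel (\<lambda>t. exp (- \<bar>a + t\<bar> / b))"
proof -
  define h where "h t = ennreal (if 0 \<le> t then exp (- (1/b) * t) else 0)" for t :: real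
  have [measurable]: "h \<in> borel_measurable borel" unfolding h_def by measurable
  have "((\<lambda>t::real. exp (- (1/b) * t)) has_integral exp (- (1/b) * 0) / (1/b)) {0..}"
    by (rule has_integral_exp_minus_to_infinity) (use b in simp)
  then have "((\<lambda>t::real. if t \<in> {0..} then exp (- (1/b) * t) else 0) has_integral b) UNIV"
    by (subst has_integral_restrict_UNIV) simp
  then have h: "integral\<^sup>N lborel h = b"
    unfolding h_def by (subst nn_integral_has_integral_lborel) auto
  have h_reflected: "(\<integral>\<^sup>+t. h (- t) \<partial>lborel) = b"
    using nn_integral_real_affine[of h "-1" 0] h by simp
  have "(\<integral>\<^sup>+t. ennreal (exp (- \<bar>t\<bar> / b)) \<partial>lborel) \<le> (\<integral>\<^sup>+t. h t + h (- t) \<partial>lborel)"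
    by (intro nn_integral_mono) (auto simp: h_def)
  also have "\<dots> = ennreal b + ennreal b"
    by (subst nn_integral_add) (auto simp: h h_reflected)
  finally have "(\<integral>\<^sup>+t. ennreal (exp (- \<bar>t\<bar> / b)) \<partial>lborel) < \<infinity>"
    by (simp add: order_le_less_trans ennreal_plus[symmetric] del: ennreal_plus)
  then have "integrable lborel (\<lambda>t::real. exp (- \<bar>t\<bar> / b))"
    by (intro integrableI_nonneg) auto
  from lborel_integrable_real_affine[OF this, of 1 a] show ?thesis by simp
qed

lemma laplace_density_line_le:
  fixes x y :: "real ^ 'n"
  assumes "b > 0"
  shows "laplace_density b x (y + t *\<^sub>R ones) \<le> exp (- \<bar>(y $ i - x $ i) + t\<bar> / b) / (2 * b) ^ CARD('n)"
proof -
  have "(y + t *\<^sub>R ones) $ i - x $ i = (y $ i - x $ i) + t"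
    by (simp add: ones_def)
  then show ?thesis
    using laplace_density_le_coordinate[OF assms, of x "y + t *\<^sub>R ones" i] by (simp only:)
qed

lemma integrable_laplace_density_line:
  fixes x y :: "real ^ 'n"
  assumes b: "b > 0"
  shows "integrable lborel (\<lambda>t. laplace_density b x (y + t *\<^sub>R ones))"
proof (rule Bochner_Integration.integrable_bound)
  fix i :: 'n
  show "integrable lborel (\<lambda>t. exp (- \<bar>(y $ i - x $ i) + t\<bar> / b) / (2 * b) ^ CARD('n))"
    using integrable_exp_abs[OF b] by simp
  show "AE t in lborel. norm (laplace_density b x (y + t *\<^sub>R ones)) \<le>
      norm (exp (- \<bar>(y $ i - x $ i) + t\<bar> / b) / (2 * b) ^ CARD('n))"
    using laplace_density_line_le[OF b, of x y _ i] laplace_density_nonneg[OF b, of x] b by auto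
qed measurable

definition proj_laplace_density :: "real \<Rightarrow> real ^ 'n \<Rightarrow> real ^ 'n \<Rightarrow> real" where
  "proj_laplace_density b x y = sqrt (real CARD('n)) * (\<integral>t. laplace_density b x (y + t *\<^sub>R ones) \<partial>lborel)"

lemma proj_laplace_density_nonneg: "b > 0 \<Longrightarrow> 0 \<le> proj_laplace_density b x y"
  unfolding proj_laplace_density_def
  by (intro mult_nonneg_nonneg Bochner_Integration.integral_nonneg laplace_density_nonneg) auto

lemma ennreal_proj_laplace_density:
  fixes x y :: "real ^ 'n"
  assumes b: "b > 0"
  shows "ennreal (proj_laplace_density b x y) =
    ennreal (sqrt (real CARD('n))) * (\<integral>\<^sup>+t. ennreal (laplace_density b x (y + t *\<^sub>R ones)) \<partial>lborel)"
  unfolding proj_laplace_density_def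
  using laplace_density_nonneg[OF b] Bochner_Integration.integral_nonneg[of lborel "\<lambda>t. laplace_density b x (y + t *\<^sub>R ones)"]
  by (subst nn_integral_eq_integral[OF integrable_laplace_density_line[OF b]]) (auto simp: ennreal_mult)

lemma proj_laplace_density_add_scaleR_ones:
  "proj_laplace_density b x (y + s *\<^sub>R ones) = proj_laplace_density b x y"
proof -
  have "(\<integral>t. laplace_density b x (y + t *\<^sub>R ones) \<partial>lborel) =
      \<bar>1\<bar> *\<^sub>R (\<integral>t. laplace_density b x (y + (s + 1 * t) *\<^sub>R ones) \<partial>lborel)"
    by (rule lborel_integral_real_affine) simp
  then show ?thesis
    unfolding proj_laplace_density_def by (simp add: scaleR_add_left add.assoc)
qed

lemma proj_laplace_density_proj_S:
  "proj_laplace_density b x (proj_S C z) = proj_laplace_density b x z"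
  by (metis proj_S_add_decomposition proj_laplace_density_add_scaleR_ones)

lemma laplace_density_line_le_nearby:
  fixes x y y' :: "real ^ 'n"
  assumes b: "b > 0" and near: "\<bar>y' $ i - y $ i\<bar> \<le> R"
  shows "laplace_density b x (y' + t *\<^sub>R ones) \<le>
    exp (R / b) * (exp (- \<bar>(y $ i - x $ i) + t\<bar> / b) / (2 * b) ^ CARD('n))"
proof -
  have "- \<bar>(y' $ i - x $ i) + t\<bar> / b \<le> R / b + - \<bar>(y $ i - x $ i) + t\<bar> / b"
    using near b by (simp add: divide_simps)
  then have "exp (- \<bar>(y' $ i - x $ i) + t\<bar> / b) \<le> exp (R / b) * exp (- \<bar>(y $ i - x $ i) + t\<bar> / b)"
    by (simp add: exp_add[symmetric])
  then show ?thesis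
    using laplace_density_line_le[OF b, of x y' t i] b
    by (auto simp: divide_right_mono mult.assoc[symmetric] intro: order_trans)
qed

lemma isCont_proj_laplace_density:
  fixes x y :: "real ^ 'n"
  assumes b: "b > 0"
  shows "isCont (proj_laplace_density b x) y"
proof (subst continuous_at_sequentially, intro allI impI)
  fix X :: "nat \<Rightarrow> real ^ 'n"
  assume X: "X \<longlonglongrightarrow> y"
  fix i :: 'n
  have "Bseq (\<lambda>n. X n - y)"
    using X by (intro convergent_imp_Bseq convergentI[OF LIM_zero[OF X]])
  then obtain R where R: "\<And>n. norm (X n - y) \<le> R"
    by (auto simp: Bseq_def)
  have bound: "laplace_density b x (X n + t *\<^sub>R ones) \<le>
      exp (R / b) * (exp (- \<bar>(y $ i - x $ i) + t\<bar> / b) / (2 * b) ^ CARD('n))" for n t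
    using component_le_norm_cart[of "X n - y" i] R[of n] by (intro laplace_density_line_le_nearby b) simp
  have "(\<lambda>n. \<integral>t. laplace_density b x (X n + t *\<^sub>R ones) \<partial>lborel) \<longlonglongrightarrow>
      (\<integral>t. laplace_density b x (y + t *\<^sub>R ones) \<partial>lborel)"
  proof (rule integral_dominated_convergence
      [where w = "\<lambda>t. exp (R / b) * (exp (- \<bar>(y $ i - x $ i) + t\<bar> / b) / (2 * b) ^ CARD('n))"])
    show "integrable lborel (\<lambda>t. exp (R / b) * (exp (- \<bar>(y $ i - x $ i) + t\<bar> / b) / (2 * b) ^ CARD('n)))"
      using integrable_exp_abs[OF b] by simp
    show "AE t in lborel. (\<lambda>n. laplace_density b x (X n + t *\<^sub>R ones)) \<longlonglongrightarrow> laplace_density b x (y + t *\<^sub>R ones)"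
      using X continuous_on_laplace_density[of b x]
      by (intro AE_I2 isCont_tendsto_compose[where g = "laplace_density b x"] tendsto_intros)
         (auto simp: continuous_on_eq_continuous_at)
    show "AE t in lborel. norm (laplace_density b x (X n + t *\<^sub>R ones)) \<le>
        exp (R / b) * (exp (- \<bar>(y $ i - x $ i) + t\<bar> / b) / (2 * b) ^ CARD('n))" for n
      using bound laplace_density_nonneg[OF b, of x] by auto
  qed measurable
  then show "(proj_laplace_density b x \<circ> X) \<longlonglongrightarrow> proj_laplace_density b x y"
    unfolding proj_laplace_density_def comp_def by (intro tendsto_intros)
qed

lemma continuous_on_proj_laplace_density: "b > 0 \<Longrightarrow> continuous_on S (proj_laplace_density b x)"
  by (intro continuous_at_imp_continuous_on ballI isCont_proj_laplace_density)

lemma borel_measurable_proj_laplace_density [measurable]: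
  "b > 0 \<Longrightarrow> proj_laplace_density b x \<in> borel_measurable borel"
  by (rule borel_measurable_continuous_onI[OF continuous_on_proj_laplace_density])

section \<open>The density of the projected noisy vector\<close>

lemma nn_integral_slab_line:
  fixes z :: "real ^ 'n"
  shows "(\<integral>\<^sup>+t. indicator (slab C) (z - t *\<^sub>R ones) \<partial>lborel) = ennreal (1 / sqrt (real CARD('n)))"
proof -
  define s where "s = (\<Sum>i\<in>UNIV. z $ i)"
  define N where "N = real CARD('n)"
  have N: "N > 0" unfolding N_def by simp
  have "indicator (slab C) (z - t *\<^sub>R ones) = (indicator {(s - C - sqrt N) / N .. (s - C) / N} t :: ennreal)" for t
  proof -
    have "(\<Sum>i\<in>UNIV. (z - t *\<^sub>R ones) $ i) = s - N * t"
      using sum_add_scaleR_ones[of z "-t"] unfolding s_def N_def by simp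
    then show ?thesis
      using N unfolding slab_def N_def[symmetric] by (auto simp: indicator_def field_simps)
  qed
  then have "(\<integral>\<^sup>+t. indicator (slab C) (z - t *\<^sub>R ones) \<partial>lborel) =
      emeasure lborel {(s - C - sqrt N) / N .. (s - C) / N}"
    by simp
  also have "\<dots> = ennreal ((s - C) / N - (s - C - sqrt N) / N)"
    using N by (subst emeasure_lborel_Icc) (auto simp: divide_right_mono)
  also have "(s - C) / N - (s - C - sqrt N) / N = 1 / sqrt N"
    using N by (simp add: field_simps)
  finally show ?thesis unfolding N_def .
qed

lemma nn_integral_lborel_add:
  fixes f :: "'a::euclidean_space \<Rightarrow> ennreal"
  assumes [measurable]: "f \<in> borel_measurable borel"
  shows "(\<integral>\<^sup>+z. f z \<partial>lborel) = (\<integral>\<^sup>+w. f (w + a) \<partial>lborel)"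
  by (subst lborel_distr_plus[symmetric, of a]) (simp add: nn_integral_distr add.commute)

text \<open>Fubini over \<open>(z, t)\<close> together with the substitution \<open>z \<mapsto> z + t\<cdot>\<one>\<close>: each line \<open>z - t\<cdot>\<one>\<close>
  meets the slab in length \<open>1/\<surd>n\<close>, and the integral over the slab of a function that is
  constant along the diagonal only sees its values on \<open>K\<^sub>S\<close>.\<close>

lemma nn_integral_diagonal_invariant:
  fixes p G :: "real ^ 'n \<Rightarrow> ennreal"
  assumes [measurable]: "p \<in> borel_measurable borel" "G \<in> borel_measurable borel"
    and G_invariant: "\<And>z t. G (z + t *\<^sub>R ones) = G z"
  shows "(\<integral>\<^sup>+z. G z * p z \<partial>lborel) =
    (\<integral>\<^sup>+z. G z * indicator (slab C) z * (ennreal (sqrt (real CARD('n))) * (\<integral>\<^sup>+t. p (z + t *\<^sub>R ones) \<partial>lborel)) \<partial>lborel)"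
proof -
  define c where "c = ennreal (sqrt (real CARD('n)))"
  have lborel_pair: "pair_sigma_finite (lborel :: (real ^ 'n) measure) (lborel :: real measure)"
    by (simp add: pair_sigma_finite_def sigma_finite_lborel)
  have "(\<integral>\<^sup>+z. G z * p z \<partial>lborel) =
      (\<integral>\<^sup>+z. (\<integral>\<^sup>+t. c * (G z * p z * indicator (slab C) (z - t *\<^sub>R ones)) \<partial>lborel) \<partial>lborel)"
  proof (intro nn_integral_cong)
    fix z :: "real ^ 'n"
    have "(\<integral>\<^sup>+t. c * (G z * p z * indicator (slab C) (z - t *\<^sub>R ones)) \<partial>lborel) =
        G z * p z * (c * ennreal (1 / sqrt (real CARD('n))))"
      by (simp add: nn_integral_cmult nn_integral_slab_line mult_ac)
    also have "c * ennreal (1 / sqrt (real CARD('n))) = 1"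
      unfolding c_def by (simp add: ennreal_mult[symmetric])
    finally show "G z * p z = (\<integral>\<^sup>+t. c * (G z * p z * indicator (slab C) (z - t *\<^sub>R ones)) \<partial>lborel)"
      by simp
  qed
  also have "\<dots> = (\<integral>\<^sup>+t. (\<integral>\<^sup>+z. c * (G z * p z * indicator (slab C) (z - t *\<^sub>R ones)) \<partial>lborel) \<partial>lborel)"
    by (rule pair_sigma_finite.Fubini'[OF lborel_pair, symmetric]) measurable
  also have "\<dots> = (\<integral>\<^sup>+t. (\<integral>\<^sup>+w. c * (G w * p (w + t *\<^sub>R ones) * indicator (slab C) w) \<partial>lborel) \<partial>lborel)"
  proof (rule nn_integral_cong)
    fix t :: real
    show "(\<integral>\<^sup>+z. c * (G z * p z * indicator (slab C) (z - t *\<^sub>R ones)) \<partial>lborel) =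
        (\<integral>\<^sup>+w. c * (G w * p (w + t *\<^sub>R ones) * indicator (slab C) w) \<partial>lborel)"
      by (subst nn_integral_lborel_add[where a = "t *\<^sub>R ones"]) (simp_all add: G_invariant)
  qed
  also have "\<dots> = (\<integral>\<^sup>+w. (\<integral>\<^sup>+t. c * (G w * p (w + t *\<^sub>R ones) * indicator (slab C) w) \<partial>lborel) \<partial>lborel)"
    by (rule pair_sigma_finite.Fubini'[OF lborel_pair]) measurable
  also have "\<dots> = (\<integral>\<^sup>+w. G w * indicator (slab C) w * (c * (\<integral>\<^sup>+t. p (w + t *\<^sub>R ones) \<partial>lborel)) \<partial>lborel)"
  proof (rule nn_integral_cong)
    fix w :: "real ^ 'n"
    have "(\<integral>\<^sup>+t. c * (G w * p (w + t *\<^sub>R ones) * indicator (slab C) w) \<partial>lborel) =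
        (\<integral>\<^sup>+t. (G w * indicator (slab C) w * c) * p (w + t *\<^sub>R ones) \<partial>lborel)"
      by (simp add: mult_ac)
    also have "\<dots> = G w * indicator (slab C) w * c * (\<integral>\<^sup>+t. p (w + t *\<^sub>R ones) \<partial>lborel)"
      by (rule nn_integral_cmult) measurable
    finally show "(\<integral>\<^sup>+t. c * (G w * p (w + t *\<^sub>R ones) * indicator (slab C) w) \<partial>lborel) =
        G w * indicator (slab C) w * (c * (\<integral>\<^sup>+t. p (w + t *\<^sub>R ones) \<partial>lborel))"
      by (simp add: mult_ac)
  qed
  finally show ?thesis unfolding c_def .
qed

lemma is_proj_density_proj_laplace_density:
  fixes x :: "real ^ 'n"
  assumes b: "b > 0"
  shows "is_proj_density C b x (proj_laplace_density b x)"
  unfolding is_proj_density_def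
proof (intro conjI allI borel_measurable_proj_laplace_density proj_laplace_density_nonneg b)
  show "distr (noisy_law b x) borel (proj_S C) = density (hyperplane_measure C) (\<lambda>y. ennreal (proj_laplace_density b x y))"
  proof (rule measure_eqI)
    fix A :: "(real ^ 'n) set"
    assume "A \<in> sets (distr (noisy_law b x) borel (proj_S C))"
    then have A [measurable]: "A \<in> sets borel" by simp
    have "proj_S C -` A \<in> sets borel"
      using measurable_sets[OF borel_measurable_proj_S A, of C] by simp
    have "emeasure (distr (noisy_law b x) borel (proj_S C)) A =
        (\<integral>\<^sup>+z. indicator A (proj_S C z) * ennreal (laplace_density b x z) \<partial>lborel)"
      using \<open>proj_S C -` A \<in> sets borel\<close>
      by (simp add: noisy_law_def emeasure_distr emeasure_density mult.commute indicator_vimage[symmetric])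
    also have "\<dots> = (\<integral>\<^sup>+z. indicator A (proj_S C z) * indicator (slab C) z * ennreal (proj_laplace_density b x z) \<partial>lborel)"
      by (subst nn_integral_diagonal_invariant[where C = C])
         (simp_all add: proj_S_add_scaleR_ones ennreal_proj_laplace_density[OF b])
    also have "\<dots> = emeasure (density (hyperplane_measure C) (\<lambda>y. ennreal (proj_laplace_density b x y))) A"
      using b by (simp add: emeasure_density nn_integral_hyperplane_measure proj_laplace_density_proj_S mult_ac)
    finally show "emeasure (distr (noisy_law b x) borel (proj_S C)) A =
        emeasure (density (hyperplane_measure C) (\<lambda>y. ennreal (proj_laplace_density b x y))) A" .
  qed simp
qed

section \<open>Uniqueness of continuous densities on the hyperplane\<close>

lemma continuous_on_AE_eq:
  fixes f g :: "'a::topological_space \<Rightarrow> real"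
  assumes AE: "AE z in M. f z = g z" and sets_M: "sets M = sets borel" and S: "S \<in> sets borel"
    and "continuous_on S f" "continuous_on S g"
    and charges_open: "\<And>U. open U \<Longrightarrow> S \<inter> U \<noteq> {} \<Longrightarrow> emeasure M (S \<inter> U) > 0"
    and "y \<in> S"
  shows "f y = g y"
proof (rule ccontr)
  assume "f y \<noteq> g y"
  have "continuous_on S (\<lambda>z. f z - g z)"
    using assms(4,5) by (intro continuous_intros)
  then obtain U where "open U" and U: "U \<inter> S = (\<lambda>z. f z - g z) -` (- {0}) \<inter> S"
    unfolding continuous_on_open_invariant by (meson open_Compl closed_singleton)
  have "S \<inter> U \<in> sets M"
    using S \<open>open U\<close> sets_M by auto
  moreover have "{z \<in> space M. \<not> z \<notin> S \<inter> U} = S \<inter> U"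
    using sets_eq_imp_space_eq[OF sets_M] by auto
  moreover have "AE z in M. z \<notin> S \<inter> U"
    using AE by eventually_elim (use U in auto)
  ultimately have "emeasure M (S \<inter> U) = 0"
    by (simp add: AE_iff_measurable)
  moreover have "y \<in> S \<inter> U"
    using U \<open>y \<in> S\<close> \<open>f y \<noteq> g y\<close> by auto
  ultimately show False
    using charges_open[OF \<open>open U\<close>] by auto
qed

lemma proj_density_eq_proj_laplace_density:
  fixes x y :: "real ^ 'n"
  assumes b: "b > 0" and f: "is_proj_density C b x f" and f_cont: "continuous_on (K_S C) f"
    and y: "y \<in> K_S C"
  shows "f y = proj_laplace_density b x y"
proof (rule continuous_on_AE_eq[where M = "hyperplane_measure C" and S = "K_S C"])
  interpret sigma_finite_measure "hyperplane_measure C :: (real ^ 'n) measure"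
    by (rule sigma_finite_hyperplane_measure)
  have "density (hyperplane_measure C) (\<lambda>y. ennreal (f y)) =
      density (hyperplane_measure C) (\<lambda>y. ennreal (proj_laplace_density b x y))"
    using f is_proj_density_proj_laplace_density[OF b, of C x] unfolding is_proj_density_def by simp
  then have "AE y in hyperplane_measure C. ennreal (f y) = ennreal (proj_laplace_density b x y)"
    using f b by (subst (asm) density_unique_iff) (auto simp: is_proj_density_def)
  moreover have "\<And>y. 0 \<le> f y"
    using f by (simp add: is_proj_density_def)
  ultimately show "AE y in hyperplane_measure C. f y = proj_laplace_density b x y"
    by (auto simp: proj_laplace_density_nonneg[OF b])
  show "K_S C \<in> sets borel"
    using closed_K_S by (rule borel_closed)
  show "continuous_on (K_S C) (proj_laplace_density b x)"
    using b by (rule continuous_on_proj_laplace_density)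
  show "emeasure (hyperplane_measure C) (K_S C \<inter> U) > 0" if "open U" "K_S C \<inter> U \<noteq> {}" for U :: "(real ^ 'n) set"
    using that emeasure_hyperplane_measure_pos by blast
qed (use f_cont y in simp_all)

section \<open>Swapping two coordinates\<close>

lemma sw_nth: "sw i j y $ k = y $ Transposition.transpose i j k"
  by (simp add: sw_def transpose_def)

lemma sw_in_K_S: "y \<in> K_S C \<Longrightarrow> sw i j y \<in> K_S C"
  using sum.permute[OF permutes_swap_id[of i UNIV j], where g = "\<lambda>k. y $ k"]
  by (simp add: K_S_def sw_nth comp_def)

lemma sw_add_scaleR_ones: "sw i j (y + t *\<^sub>R ones) = sw i j y + t *\<^sub>R ones"
  by (simp add: vec_eq_iff sw_nth ones_def)

lemma abs_diff_add_abs_diff_le_swap: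
  fixes a a' u u' :: real
  assumes "a \<le> a'" "u \<le> u'"
  shows "\<bar>u - a\<bar> + \<bar>u' - a'\<bar> \<le> \<bar>u' - a\<bar> + \<bar>u - a'\<bar>"
  using assms by (auto simp: abs_if)

lemma laplace_density_sw_le:
  fixes x u :: "real ^ 'n"
  assumes b: "b > 0" and "x $ i \<le> x $ j" "u $ i \<le> u $ j"
  shows "laplace_density b x (sw i j u) \<le> laplace_density b x u"
proof (cases "i = j")
  case True
  then have "sw i j u = u"
    by (simp add: vec_eq_iff sw_nth)
  then show ?thesis by simp
next
  case False
  define \<phi> where "\<phi> k v = exp (- \<bar>v - x $ k\<bar> / b) / (2 * b)" for k v
  have split: "laplace_density b x v = \<phi> i (v $ i) * \<phi> j (v $ j) * (\<Prod>k\<in>UNIV - {i, j}. \<phi> k (v $ k))" for v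
  proof -
    have "laplace_density b x v = (\<Prod>k\<in>UNIV. \<phi> k (v $ k))"
      unfolding laplace_density_def \<phi>_def ..
    then show ?thesis
      using prod.subset_diff[of "{i, j}" UNIV "\<lambda>k. \<phi> k (v $ k)"] False by (simp add: mult_ac)
  qed
  have rest: "(\<Prod>k\<in>UNIV - {i, j}. \<phi> k (sw i j u $ k)) = (\<Prod>k\<in>UNIV - {i, j}. \<phi> k (u $ k))"
    by (intro prod.cong) (auto simp: sw_def)
  have "exp (- \<bar>u $ j - x $ i\<bar> / b) * exp (- \<bar>u $ i - x $ j\<bar> / b) \<le>
      exp (- \<bar>u $ i - x $ i\<bar> / b) * exp (- \<bar>u $ j - x $ j\<bar> / b)"
    using abs_diff_add_abs_diff_le_swap[OF assms(2,3)] b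
    by (simp add: exp_add[symmetric] divide_simps)
  then have "\<phi> i (u $ j) * \<phi> j (u $ i) \<le> \<phi> i (u $ i) * \<phi> j (u $ j)"
    unfolding \<phi>_def using b by (simp add: divide_right_mono)
  moreover have "0 \<le> (\<Prod>k\<in>UNIV - {i, j}. \<phi> k (u $ k))"
    unfolding \<phi>_def using b by (intro prod_nonneg) auto
  ultimately show ?thesis
    unfolding split[of "sw i j u"] split[of u] rest using False by (simp add: sw_def mult_right_mono)
qed

lemma proj_laplace_density_sw_le:
  fixes x y :: "real ^ 'n"
  assumes b: "b > 0" and "x $ i \<le> x $ j" "y $ i \<le> y $ j"
  shows "proj_laplace_density b x (sw i j y) \<le> proj_laplace_density b x y"
  unfolding proj_laplace_density_def
proof (intro mult_left_mono integral_mono integrable_laplace_density_line b)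
  show "laplace_density b x (sw i j y + t *\<^sub>R ones) \<le> laplace_density b x (y + t *\<^sub>R ones)" for t
    unfolding sw_add_scaleR_ones[symmetric] using assms by (intro laplace_density_sw_le) (auto simp: ones_def)
qed simp

theorem lemma10:
  fixes C b :: real and x :: "real ^ 'n"
  assumes "CARD('n) \<ge> 2" and "C > 0" and "b > 0" and "x \<in> K_S C"
  shows "(\<exists>f. is_proj_density C b x f \<and> continuous_on (K_S C) f) \<and>
         (\<forall>f. is_proj_density C b x f \<and> continuous_on (K_S C) f \<longrightarrow>
            (\<forall>i j y. y \<in> K_S C \<and> x $ i \<le> x $ j \<and> y $ i \<le> y $ j \<longrightarrow> f y \<ge> f (sw i j y)))"
proof (intro conjI allI impI)
  show "\<exists>f. is_proj_density C b x f \<and> continuous_on (K_S C) f"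
    using is_proj_density_proj_laplace_density continuous_on_proj_laplace_density \<open>b > 0\<close> by blast
  fix f :: "real ^ 'n \<Rightarrow> real" and i j :: 'n and y :: "real ^ 'n"
  assume f: "is_proj_density C b x f \<and> continuous_on (K_S C) f"
    and y: "y \<in> K_S C \<and> x $ i \<le> x $ j \<and> y $ i \<le> y $ j"
  then have "f (sw i j y) = proj_laplace_density b x (sw i j y)"
    using \<open>b > 0\<close> by (intro proj_density_eq_proj_laplace_density sw_in_K_S) auto
  also have "\<dots> \<le> proj_laplace_density b x y"
    using y \<open>b > 0\<close> by (intro proj_laplace_density_sw_le) auto
  also have "\<dots> = f y"
    using f y \<open>b > 0\<close> by (intro proj_density_eq_proj_laplace_density[symmetric]) auto
  finally show "f (sw i j y) \<le> f y" .
qed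

end
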